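(* Let $b>0$. For $\lambda\in\mathbb{C}\setminus[2,\infty)$ write $\lambda=-2\cos(\omega)$ with $\omega\in\Omega=\{\omega\in\mathbb{C}:\ \operatorname{Re}\omega\in[0,\pi),\ \operatorname{Im}\omega\in\mathbb{R}\}$, and define $$G_\lambda(x)=\frac{1}{2b\sin(\omega)}\,\frac{\sinh\left(\frac{\omega}{b}x\right)}{\sinh\left(\frac{\pi}{b}x\right)},\qquad x\in\mathbb{R}\setminus\{0\},\qquad G_\lambda(0)=\frac{1}{2\pi b}\,\frac{\omega}{\sin(\omega)}.$$ Then for every $\lambda\in\mathbb{C}\setminus[2,\infty)$, $$|G_\lambda(x)|\le|G_\lambda(0)|\quad\text{for all }x\in\mathbb{R}.$$
   Context: $G_\lambda(x-y)$ is the integral kernel of the resolvent $(W_0(b)-\lambda)^{-1}$, where $W_0(b)$ is multiplication by $2\cosh(2\pi bk)$ in Fourier space. The value $G_\lambda(0)$ is the limit of $G_\lambda(x)$ as $x\to0$. At $\omega=0$ (i.e. $\lambda=-2$) the expressions are understood by continuity in $\omega$: $\frac{\sinh(\omega x/b)}{\sin\omega}\to x/b$ and $\frac{\omega}{\sin\omega}\to1$. *)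

theory Defs
  imports "HOL-Analysis.Analysis"
begin

text \<open>Resolvent kernel G_lambda(x), written in terms of the parameter w = omega
  (lambda = -2 cos w, w in Omega).  At w = 0 the expressions are
  taken by continuity: sinh(w x / b)/sin w becomes x/b and
  w / sin w becomes 1.\<close>
definition G :: "real \<Rightarrow> complex \<Rightarrow> real \<Rightarrow> complex" where
  "G b w x =
    (if x = 0 then
       (if w = 0 then complex_of_real (1 / (2 * pi * b))
        else w / (complex_of_real (2 * pi * b) * sin w))
     else
       (if w = 0 then complex_of_real ((x / b) / (2 * b * sinh (pi * x / b)))
        else sinh (w * complex_of_real (x / b))
              / (complex_of_real (2 * b) * sin w * complex_of_real (sinh (pi * x / b)))))"

end

theory Submission
  imports Defs
begin

(* Away from x = 0 the bound is equivalent to pi |sinh (w t)| <= |w| |sinh (pi t)| with t = x / b.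
   Since |sinh (a + i c)|^2 = sinh a ^ 2 + sin c ^ 2, it suffices to bound the two parts
   separately: convexity of sinh on [0, oo) gives sinh (a |t|) <= (a / pi) sinh (pi |t|) for
   0 <= a <= pi, and |sin (c t)| <= |c t| <= |c| sinh (pi |t|) / pi.  The degenerate parameter
   w = 0 is the inequality pi |t| <= |sinh (pi t)|. *)

lemma Re_sinh: "Re (sinh z) = sinh (Re z) * cos (Im z)"
  by (simp add: sinh_field_def Re_exp sinh_def cosh_def field_simps)

lemma Im_sinh: "Im (sinh z) = cosh (Re z) * sin (Im z)"
  by (simp add: sinh_field_def Im_exp sinh_def cosh_def field_simps)

lemma norm_sinh_squared: "norm (sinh z) ^ 2 = sinh (Re z) ^ 2 + sin (Im z) ^ 2"
proof -
  have "norm (sinh z) ^ 2 = sinh (Re z) ^ 2 * cos (Im z) ^ 2 + cosh (Re z) ^ 2 * sin (Im z) ^ 2"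
    by (simp add: cmod_power2 Re_sinh Im_sinh power_mult_distrib)
  also have "\<dots> = sinh (Re z) ^ 2 * (1 - sin (Im z) ^ 2) + (sinh (Re z) ^ 2 + 1) * sin (Im z) ^ 2"
    by (simp only: cosh_square_eq cos_squared_eq)
  also have "\<dots> = sinh (Re z) ^ 2 + sin (Im z) ^ 2"
    by algebra
  finally show ?thesis .
qed

lemma sinh_mult_le:
  fixes c y :: real
  assumes "0 \<le> c" "c \<le> 1" "0 \<le> y"
  shows "sinh (c * y) \<le> c * sinh y"
proof -
  have "c * sinh 0 - sinh (c * 0) \<le> c * sinh y - sinh (c * y)"
  proof (rule DERIV_nonneg_imp_increasing_open[of 0 y])
    fix x :: real
    assume x: "0 < x" "x < y"
    have "cosh (c * x) \<le> cosh x"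
      using assms x by (subst cosh_real_nonneg_le_iff) (auto simp: mult_left_le_one_le)
    then have "0 \<le> c * cosh x - c * cosh (c * x)"
      using assms by (simp add: right_diff_distrib[symmetric])
    moreover have "((\<lambda>v. c * sinh v - sinh (c * v)) has_real_derivative
        (c * cosh x - c * cosh (c * x))) (at x)"
      by (auto intro!: derivative_eq_intros)
    ultimately show "\<exists>z. ((\<lambda>v. c * sinh v - sinh (c * v)) has_real_derivative z) (at x) \<and> 0 \<le> z"
      by blast
  qed (use assms in \<open>auto intro!: continuous_intros\<close>)
  then show ?thesis by simp
qed

lemma abs_le_abs_sinh: "\<bar>y\<bar> \<le> \<bar>sinh (y :: real)\<bar>"
  using real_le_abs_sinh[of y] by (simp add: sinh_field_def exp_minus)

lemma abs_sinh_mult_le: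
  fixes a t :: real
  assumes "\<bar>a\<bar> \<le> pi"
  shows "pi * \<bar>sinh (a * t)\<bar> \<le> \<bar>a\<bar> * \<bar>sinh (pi * t)\<bar>"
proof -
  have "\<bar>sinh (a * t)\<bar> = sinh ((\<bar>a\<bar> / pi) * (pi * \<bar>t\<bar>))"
    by (simp flip: sinh_real_abs add: abs_mult)
  also have "\<dots> \<le> (\<bar>a\<bar> / pi) * sinh (pi * \<bar>t\<bar>)"
    using assms by (intro sinh_mult_le) auto
  also have "\<dots> = (\<bar>a\<bar> / pi) * \<bar>sinh (pi * t)\<bar>"
    by (simp flip: sinh_real_abs add: abs_mult)
  finally show ?thesis
    by (simp add: field_simps)
qed

lemma abs_sin_mult_le:
  fixes c t :: real
  shows "pi * \<bar>sin (c * t)\<bar> \<le> \<bar>c\<bar> * \<bar>sinh (pi * t)\<bar>"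
proof -
  have "pi * \<bar>sin (c * t)\<bar> \<le> pi * \<bar>c * t\<bar>"
    using abs_sin_x_le_abs_x by simp
  also have "\<dots> = \<bar>c\<bar> * \<bar>pi * t\<bar>"
    by (simp add: abs_mult)
  also have "\<dots> \<le> \<bar>c\<bar> * \<bar>sinh (pi * t)\<bar>"
    by (intro mult_left_mono abs_le_abs_sinh) auto
  finally show ?thesis .
qed

lemma norm_sinh_mult_le:
  fixes w :: complex and t :: real
  assumes "\<bar>Re w\<bar> \<le> pi"
  shows "pi * norm (sinh (w * of_real t)) \<le> norm w * \<bar>sinh (pi * t)\<bar>"
proof (rule power2_le_imp_le)
  define P where "P = \<bar>sinh (pi * t)\<bar>"
  have "(pi * norm (sinh (w * of_real t))) ^ 2
      = (pi * \<bar>sinh (Re w * t)\<bar>) ^ 2 + (pi * \<bar>sin (Im w * t)\<bar>) ^ 2"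
    by (simp add: power_mult_distrib norm_sinh_squared distrib_left)
  also have "\<dots> \<le> (\<bar>Re w\<bar> * P) ^ 2 + (\<bar>Im w\<bar> * P) ^ 2"
    unfolding P_def using assms
    by (intro add_mono power_mono abs_sinh_mult_le abs_sin_mult_le) auto
  also have "\<dots> = (norm w * P) ^ 2"
    by (simp add: power_mult_distrib cmod_power2 distrib_right)
  finally show "(pi * norm (sinh (w * of_real t))) ^ 2 \<le> (norm w * \<bar>sinh (pi * t)\<bar>) ^ 2"
    unfolding P_def .
qed simp

lemma sin_nonzero_in_strip:
  fixes w :: complex
  assumes "Re w \<in> {0..<pi}" "w \<noteq> 0"
  shows "sin w \<noteq> 0"
proof
  assume "sin w = 0"
  then obtain n :: int where n: "w = of_real (n * pi)"
    by (auto simp: sin_eq_0)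
  with assms(1) have "0 \<le> real_of_int n * pi" "real_of_int n * pi < 1 * pi"
    by auto
  then have "0 \<le> real_of_int n" "real_of_int n < 1"
    using pi_gt_zero by (auto simp: zero_le_mult_iff)
  then have "n = 0" by linarith
  with n assms(2) show False by simp
qed

lemma norm_G_le_norm_G_0:
  assumes "b > 0" "\<bar>Re w\<bar> \<le> pi" "sin w \<noteq> 0"
  shows "norm (G b w x) \<le> norm (G b w 0)"
proof (cases "x = 0")
  case False
  define t where "t = x / b"
  have "w \<noteq> 0"
    using assms(3) by auto
  have "sinh (pi * t) \<noteq> 0"
    using assms(1) False by (simp add: t_def)
  then have pos: "0 < 2 * pi * b * norm (sin w) * \<bar>sinh (pi * t)\<bar>"
    using assms by simp
  have "norm (G b w x) = norm (sinh (w * of_real t)) / (2 * b * norm (sin w) * \<bar>sinh (pi * t)\<bar>)"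
    using \<open>w \<noteq> 0\<close> False assms(1) by (simp add: G_def t_def norm_divide norm_mult)
  also have "\<dots> = pi * norm (sinh (w * of_real t)) / (2 * pi * b * norm (sin w) * \<bar>sinh (pi * t)\<bar>)"
    by simp
  also have "\<dots> \<le> norm w * \<bar>sinh (pi * t)\<bar> / (2 * pi * b * norm (sin w) * \<bar>sinh (pi * t)\<bar>)"
    using pos assms(2) by (intro divide_right_mono norm_sinh_mult_le) auto
  also have "\<dots> = norm w / (2 * pi * b * norm (sin w))"
    using \<open>sinh (pi * t) \<noteq> 0\<close> by simp
  also have "\<dots> = norm (G b w 0)"
    using \<open>w \<noteq> 0\<close> assms(1) by (simp add: G_def norm_divide norm_mult)
  finally show ?thesis .
qed simp

lemma norm_G_le_norm_G_0_at_param_0: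
  assumes "b > 0"
  shows "norm (G b 0 x) \<le> norm (G b 0 0)"
proof (cases "x = 0")
  case False
  define t where "t = x / b"
  have "sinh (pi * t) \<noteq> 0"
    using assms False by (simp add: t_def)
  then have pos: "0 < 2 * pi * b * \<bar>sinh (pi * t)\<bar>"
    using assms by simp
  have "norm (G b 0 x) = \<bar>t\<bar> / (2 * b * \<bar>sinh (pi * t)\<bar>)"
    using False assms by (simp add: G_def t_def norm_divide norm_mult abs_mult)
  also have "\<dots> = pi * \<bar>t\<bar> / (2 * pi * b * \<bar>sinh (pi * t)\<bar>)"
    by simp
  also have "\<dots> \<le> \<bar>sinh (pi * t)\<bar> / (2 * pi * b * \<bar>sinh (pi * t)\<bar>)"
    using pos abs_le_abs_sinh[of "pi * t"] by (intro divide_right_mono) (auto simp: abs_mult)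
  also have "\<dots> = norm (G b 0 0)"
    using \<open>sinh (pi * t) \<noteq> 0\<close> assms by (simp add: G_def norm_divide norm_mult)
  finally show ?thesis .
qed simp

(* The hypotheses on lam only record the parametrisation lam = -2 cos w; the bound holds for
   every w in the strip. *)
theorem proposition3p2:
  fixes b :: real and lam w :: complex
  assumes "b > 0"
    and "lam \<notin> complex_of_real ` {2..}"
    and "Re w \<in> {0..<pi}"
    and "lam = - 2 * cos w"
  shows "\<forall>x::real. norm (G b w x) \<le> norm (G b w 0)"
proof (cases "w = 0")
  case True
  then show ?thesis
    using norm_G_le_norm_G_0_at_param_0[OF assms(1)] by simp
next
  case False
  then have "sin w \<noteq> 0"
    using sin_nonzero_in_strip assms(3) by blast
  moreover have "\<bar>Re w\<bar> \<le> pi"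
    using assms(3) by auto
  ultimately show ?thesis
    using norm_G_le_norm_G_0[OF assms(1)] by blast
qed

end
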